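(* Let $H$ be a complex infinite-dimensional separable Hilbert space and let $(f_n)_{n=1}^\infty$ be a frame for $H$ with analysis operator $U$. The following are equivalent: (a) $\dim\operatorname{Im}(I-U^*U)<\infty$; (b) there exist a finite-dimensional subspace $L$ of $H$ and a sequence $(g_n)_{n=1}^\infty$ in $L$ such that $(f_n+g_n)_{n=1}^\infty$ is a Parseval frame for $H$; (c) there is a closed subspace $M$ of $H$ of finite codimension such that $x=\sum_{n=1}^\infty\langle x,f_n\rangle f_n$ for all $x\in M$.
   Context: A frame: there are $0<A\le B$ with $A\|x\|^2\le\sum_n|\langle x,f_n\rangle|^2\le B\|x\|^2$ for all $x\in H$. A Parseval frame: $\sum_n|\langle x,h_n\rangle|^2=\|x\|^2$ for all $x$. The analysis operator is $U:H\to\ell^2$, $Ux=(\langle x,f_n\rangle)_n$. *)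

theory Defs
  imports "HOL-Analysis.Analysis"
begin

class complex_inner = real_normed_vector +
  fixes scaleC :: "complex \<Rightarrow> 'a \<Rightarrow> 'a" (infixr "*\<^sub>C" 75)
    and cinner :: "'a \<Rightarrow> 'a \<Rightarrow> complex"
  assumes scaleC_add_right: "a *\<^sub>C (x + y) = a *\<^sub>C x + a *\<^sub>C y"
    and scaleC_add_left: "(a + b) *\<^sub>C x = a *\<^sub>C x + b *\<^sub>C x"
    and scaleC_scaleC: "a *\<^sub>C (b *\<^sub>C x) = (a * b) *\<^sub>C x"
    and scaleC_one: "1 *\<^sub>C x = x"
    and scaleR_scaleC: "scaleR r x = of_real r *\<^sub>C x"
    and cinner_commute: "cinner x y = cnj (cinner y x)"
    and cinner_add_left: "cinner (x + y) z = cinner x z + cinner y z"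
    and cinner_scaleC_left: "cinner (a *\<^sub>C x) y = a * cinner x y"
    and cinner_pos: "Im (cinner x x) = 0 \<and> 0 \<le> Re (cinner x x)"
    and cinner_eq_zero_iff: "cinner x x = 0 \<longleftrightarrow> x = 0"
    and norm_eq_sqrt_cinner: "norm x = sqrt (Re (cinner x x))"

class chilbert_space = complex_inner + complete_space

definition cspan :: "'a::complex_inner set \<Rightarrow> 'a set" where
  "cspan S = {y. \<exists>T c. finite T \<and> T \<subseteq> S \<and> y = (\<Sum>x\<in>T. c x *\<^sub>C x)}"

definition csubspace :: "'a::complex_inner set \<Rightarrow> bool" where
  "csubspace V \<longleftrightarrow> 0 \<in> V \<and> (\<forall>x\<in>V. \<forall>y\<in>V. x + y \<in> V) \<and> (\<forall>c. \<forall>x\<in>V. c *\<^sub>C x \<in> V)"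

definition cfinite_dim :: "'a::complex_inner set \<Rightarrow> bool" where
  "cfinite_dim V \<longleftrightarrow> (\<exists>S. finite S \<and> cspan S = V)"

text \<open>Finite codimension: the quotient space by M is finite-dimensional, i.e.
  there is a finite set S with UNIV = M + span S.\<close>
definition finite_codim :: "'a::complex_inner set \<Rightarrow> bool" where
  "finite_codim M \<longleftrightarrow> (\<exists>S. finite S \<and> (\<forall>x. \<exists>m\<in>M. x - m \<in> cspan S))"

definition separable_space :: "'a::complex_inner itself \<Rightarrow> bool" where
  "separable_space _ \<longleftrightarrow> (\<exists>D::'a set. countable D \<and> closure D = UNIV)"

definition infinite_dim_space :: "'a::complex_inner itself \<Rightarrow> bool" where
  "infinite_dim_space _ \<longleftrightarrow> \<not> cfinite_dim (UNIV :: 'a set)"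

definition is_frame :: "(nat \<Rightarrow> 'a::complex_inner) \<Rightarrow> bool" where
  "is_frame f \<longleftrightarrow> (\<exists>A B. 0 < A \<and> A \<le> B \<and>
     (\<forall>x. summable (\<lambda>n. (cmod (cinner x (f n)))\<^sup>2) \<and>
          A * (norm x)\<^sup>2 \<le> (\<Sum>n. (cmod (cinner x (f n)))\<^sup>2) \<and>
          (\<Sum>n. (cmod (cinner x (f n)))\<^sup>2) \<le> B * (norm x)\<^sup>2))"

definition is_parseval_frame :: "(nat \<Rightarrow> 'a::complex_inner) \<Rightarrow> bool" where
  "is_parseval_frame h \<longleftrightarrow>
     (\<forall>x. summable (\<lambda>n. (cmod (cinner x (h n)))\<^sup>2) \<and>
          (\<Sum>n. (cmod (cinner x (h n)))\<^sup>2) = (norm x)\<^sup>2)"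

text \<open>The frame operator U*U, where U x = (cinner x (f n))_n is the analysis operator
  and U* c = sum_n c_n f_n is its adjoint; hence U*U x = sum_n cinner x (f n) f_n.\<close>
definition frame_op :: "(nat \<Rightarrow> 'a::complex_inner) \<Rightarrow> 'a \<Rightarrow> 'a" where
  "frame_op f x = (\<Sum>n. cinner x (f n) *\<^sub>C f n)"

end

theory Submission
  imports Defs
begin

text \<open>Let \<open>S = U\<^sup>*U\<close> be the frame operator and \<open>T = I - S\<close> its defect; both are bounded and
  self-adjoint.  On a space \<open>M\<close> as in (c) the defect vanishes, so \<open>range T\<close> is spanned by the
  \<open>T\<close>-images of a finite complement of \<open>M\<close>; conversely \<open>ker T\<close> is such an \<open>M\<close>.  If all \<open>g\<^sub>n\<close> lie
  in \<open>L\<close>, the compression of \<open>T\<close> to \<open>L\<^sup>\<perp>\<close> vanishes, which confines \<open>range T\<close> to \<open>L + T L\<close>.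
  Conversely, if \<open>K = range T\<close> is finite-dimensional, then \<open>S\<close> is the identity on \<open>K\<^sup>\<perp>\<close> and
  positive definite on \<open>K\<close>; replacing, inside each \<open>f\<^sub>n\<close>, an orthonormal basis \<open>e\<close> of \<open>K\<close> by a
  basis \<open>u\<close> that is orthonormal for \<open>\<langle>S\<cdot>, \<cdot>\<rangle>\<close> (Gram--Schmidt) produces a Parseval frame.\<close>

section \<open>Complex inner product spaces\<close>

subclass (in chilbert_space) banach ..

lemma scaleC_zero_left [simp]: "0 *\<^sub>C x = 0"
  using scaleC_add_left[of 0 0 x] by simp

lemma scaleC_zero_right [simp]: "a *\<^sub>C 0 = 0"
  using scaleC_add_right[of a 0 0] by simp

lemma scaleC_minus_left: "(- a) *\<^sub>C x = - (a *\<^sub>C x)"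
  using scaleC_add_left[of a "-a" x] by (simp add: minus_unique)

lemma scaleC_minus_right: "a *\<^sub>C (- x) = - (a *\<^sub>C x)"
  using scaleC_add_right[of a x "-x"] by (simp add: minus_unique)

lemma scaleC_diff_right: "a *\<^sub>C (x - y) = a *\<^sub>C x - a *\<^sub>C y"
  using scaleC_add_right[of a x "-y"] by (simp add: scaleC_minus_right)

lemma scaleC_sum_right: "a *\<^sub>C (\<Sum>i\<in>A. f i) = (\<Sum>i\<in>A. a *\<^sub>C f i)"
  by (induction A rule: infinite_finite_induct) (auto simp: scaleC_add_right)

lemma scaleC_eq_0_iff: "a *\<^sub>C x = 0 \<longleftrightarrow> a = 0 \<or> x = 0"
proof
  assume "a *\<^sub>C x = 0"
  then have "(inverse a * a) *\<^sub>C x = 0" by (simp flip: scaleC_scaleC)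
  then show "a = 0 \<or> x = 0" by (cases "a = 0") (simp_all add: scaleC_one)
qed auto

locale inner_product_form =
  fixes \<phi> :: "'a::complex_inner \<Rightarrow> 'a \<Rightarrow> complex"
  assumes add_left: "\<phi> (x + y) z = \<phi> x z + \<phi> y z"
    and scale_left: "\<phi> (a *\<^sub>C x) y = a * \<phi> x y"
    and commute: "\<phi> x y = cnj (\<phi> y x)"
    and nonneg: "0 \<le> Re (\<phi> x x)"
    and definite: "\<phi> x x = 0 \<Longrightarrow> x = 0"
begin

lemma add_right: "\<phi> x (y + z) = \<phi> x y + \<phi> x z"
  by (metis add_left commute complex_cnj_add)

lemma scale_right: "\<phi> x (a *\<^sub>C y) = cnj a * \<phi> x y"
  by (metis scale_left commute complex_cnj_mult)

lemma zero_left [simp]: "\<phi> 0 y = 0"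
  using add_left[of 0 0 y] by simp

lemma zero_right [simp]: "\<phi> x 0 = 0"
  using commute[of x 0] by simp

lemma diff_left: "\<phi> (x - y) z = \<phi> x z - \<phi> y z"
  using add_left[of "x - y" y z] by simp

lemma diff_right: "\<phi> x (y - z) = \<phi> x y - \<phi> x z"
  using add_right[of x "y - z" z] by simp

lemma sum_left: "\<phi> (\<Sum>i\<in>I. g i) y = (\<Sum>i\<in>I. \<phi> (g i) y)"
  by (induction I rule: infinite_finite_induct) (auto simp: add_left)

lemma sum_right: "\<phi> x (\<Sum>i\<in>I. g i) = (\<Sum>i\<in>I. \<phi> x (g i))"
  by (induction I rule: infinite_finite_induct) (auto simp: add_right)

lemma self_eq_of_real: "\<phi> x x = of_real (Re (\<phi> x x))"
  using commute[of x x] by (simp add: complex_eq_iff)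

lemma self_eq_0_iff [simp]: "\<phi> x x = 0 \<longleftrightarrow> x = 0"
  using definite by auto

end

interpretation cinner: inner_product_form "cinner :: 'a::complex_inner \<Rightarrow> 'a \<Rightarrow> complex"
  by unfold_locales
    (use cinner_pos cinner_eq_zero_iff in \<open>auto intro: cinner_add_left cinner_scaleC_left cinner_commute\<close>)

lemma cinner_self: "cinner x x = of_real ((norm x)\<^sup>2)"
  using cinner_pos[of x] norm_eq_sqrt_cinner[of x] by (simp add: complex_eq_iff)

lemma cmod_squared: "(complex_of_real (cmod a))\<^sup>2 = a * cnj a"
  by (metis of_real_power complex_norm_square)

lemma norm_scaleC: "norm (a *\<^sub>C x) = cmod a * norm x"
proof -
  have "(of_real ((norm (a *\<^sub>C x))\<^sup>2) :: complex) = of_real ((cmod a * norm x)\<^sup>2)"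
    unfolding cinner_self[symmetric] cinner_scaleC_left cinner.scale_right
    by (simp add: cinner_self power_mult_distrib mult_ac cmod_squared)
  then have "(norm (a *\<^sub>C x))\<^sup>2 = (cmod a * norm x)\<^sup>2"
    using of_real_eq_iff by blast
  then show ?thesis
    by (simp add: power2_eq_iff_nonneg)
qed

lemma cmod_cinner_le: "cmod (cinner x y) \<le> norm x * norm y"
proof (cases "y = 0")
  case False
  define a where "a = cinner x y"
  define r where "r = (norm y)\<^sup>2"
  have r: "r > 0" using False by (simp add: r_def)
  define c where "c = a / of_real r"
  \<comment> \<open>expand \<open>0 \<le> \<parallel>x - c y\<parallel>\<^sup>2\<close> for the optimal \<open>c\<close>\<close>
  have "cinner (x - c *\<^sub>C y) (x - c *\<^sub>C y)
      = of_real ((norm x)\<^sup>2) - cnj c * a - c * cnj a + c * cnj c * of_real r"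
    by (simp add: cinner.diff_left cinner.diff_right cinner_scaleC_left cinner.scale_right
        cinner_self[of x] cinner_self[of y] a_def r_def algebra_simps cinner_commute[of y x])
  also have "\<dots> = of_real ((norm x)\<^sup>2 - (cmod a)\<^sup>2 / r)"
    using r by (simp add: c_def field_simps cmod_squared)
  finally have "0 \<le> (norm x)\<^sup>2 - (cmod a)\<^sup>2 / r"
    by (metis Re_complex_of_real cinner_pos)
  then have "(cmod a)\<^sup>2 \<le> (norm x * norm y)\<^sup>2"
    using r by (simp add: field_simps r_def power_mult_distrib)
  then show ?thesis
    unfolding a_def by (simp add: power2_le_iff_abs_le)
qed simp

lemma bounded_linear_cinner_left: "bounded_linear (\<lambda>x. cinner x y)"
  by (rule bounded_linear_intro[where K="norm y"])
     (auto simp: cinner_add_left scaleR_scaleC cinner_scaleC_left scaleR_conv_of_real cmod_cinner_le)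

lemma bounded_linear_scaleC: "bounded_linear (\<lambda>x. a *\<^sub>C x)"
  by (rule bounded_linear_intro[where K="cmod a"])
     (auto simp: scaleC_add_right scaleR_scaleC scaleC_scaleC norm_scaleC mult.commute)

section \<open>Spans and complex-linear maps\<close>

lemma cspanI: "finite T \<Longrightarrow> T \<subseteq> S \<Longrightarrow> y = (\<Sum>t\<in>T. c t *\<^sub>C t) \<Longrightarrow> y \<in> cspan S"
  unfolding cspan_def by blast

lemma cspanE:
  assumes "y \<in> cspan S"
  obtains T c where "finite T" "T \<subseteq> S" "y = (\<Sum>t\<in>T. c t *\<^sub>C t)"
  using assms unfolding cspan_def by blast

lemma csubspace_0: "csubspace V \<Longrightarrow> 0 \<in> V"
  by (simp add: csubspace_def)

lemma csubspace_add: "csubspace V \<Longrightarrow> x \<in> V \<Longrightarrow> y \<in> V \<Longrightarrow> x + y \<in> V"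
  by (simp add: csubspace_def)

lemma csubspace_scaleC: "csubspace V \<Longrightarrow> x \<in> V \<Longrightarrow> a *\<^sub>C x \<in> V"
  by (simp add: csubspace_def)

lemma csubspace_diff: "csubspace V \<Longrightarrow> x \<in> V \<Longrightarrow> y \<in> V \<Longrightarrow> x - y \<in> V"
  using csubspace_add[of V x "(-1) *\<^sub>C y"] csubspace_scaleC[of V y "-1"]
  by (simp add: scaleC_minus_left scaleC_one)

lemma csubspace_sum: "csubspace V \<Longrightarrow> (\<And>i. i \<in> A \<Longrightarrow> f i \<in> V) \<Longrightarrow> sum f A \<in> V"
  by (induction A rule: infinite_finite_induct) (auto simp: csubspace_0 csubspace_add)

lemma csubspace_sum_scaleC: "csubspace V \<Longrightarrow> (\<And>i. i \<in> A \<Longrightarrow> f i \<in> V) \<Longrightarrow> (\<Sum>i\<in>A. c i *\<^sub>C f i) \<in> V"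
  by (simp add: csubspace_sum csubspace_scaleC)

lemma csubspace_cspan: "csubspace (cspan S)"
  unfolding csubspace_def
proof (intro conjI ballI allI)
  show "0 \<in> cspan S"
    by (rule cspanI[of "{}"]) auto
next
  fix x y assume "x \<in> cspan S" "y \<in> cspan S"
  then obtain T1 c1 T2 c2 where T: "finite T1" "T1 \<subseteq> S" "x = (\<Sum>t\<in>T1. c1 t *\<^sub>C t)"
      "finite T2" "T2 \<subseteq> S" "y = (\<Sum>t\<in>T2. c2 t *\<^sub>C t)"
    by (metis cspanE)
  let ?c = "\<lambda>c T t. if t \<in> T then c t else 0"
  have restrict: "(\<Sum>t\<in>T1 \<union> T2. ?c c T t *\<^sub>C t) = (\<Sum>t\<in>T. c t *\<^sub>C t)"
    if "T \<subseteq> T1 \<union> T2" for c T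
  proof -
    have "(\<Sum>t\<in>T1 \<union> T2. ?c c T t *\<^sub>C t) = (\<Sum>t\<in>T1 \<union> T2. if t \<in> T then c t *\<^sub>C t else 0)"
      by (rule sum.cong) auto
    also have "\<dots> = (\<Sum>t\<in>(T1 \<union> T2) \<inter> T. c t *\<^sub>C t)"
      using T by (simp add: sum.inter_restrict)
    finally show ?thesis
      using that by (simp add: Int_absorb1)
  qed
  have "x + y = (\<Sum>t\<in>T1 \<union> T2. (?c c1 T1 t + ?c c2 T2 t) *\<^sub>C t)"
    by (simp only: scaleC_add_left sum.distrib restrict T(3,6) Un_upper1 Un_upper2)
  then show "x + y \<in> cspan S"
    using T by (intro cspanI[of "T1 \<union> T2"]) auto
next
  fix a x assume "x \<in> cspan S"
  then obtain T c where T: "finite T" "T \<subseteq> S" "x = (\<Sum>t\<in>T. c t *\<^sub>C t)"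
    by (rule cspanE)
  then have "a *\<^sub>C x = (\<Sum>t\<in>T. (a * c t) *\<^sub>C t)"
    by (simp add: scaleC_sum_right scaleC_scaleC)
  then show "a *\<^sub>C x \<in> cspan S"
    using T by (intro cspanI[of T]) auto
qed

lemma cspan_superset: "S \<subseteq> cspan S"
proof
  fix x assume "x \<in> S"
  then show "x \<in> cspan S"
    by (intro cspanI[of "{x}" _ _ "\<lambda>_. 1"]) (auto simp: scaleC_one)
qed

lemma cspan_minimal: "csubspace V \<Longrightarrow> S \<subseteq> V \<Longrightarrow> cspan S \<subseteq> V"
  by (auto elim!: cspanE intro!: csubspace_sum_scaleC)

lemma cspan_mono: "S \<subseteq> T \<Longrightarrow> cspan S \<subseteq> cspan T"
  by (meson cspan_minimal cspan_superset csubspace_cspan order_trans)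

lemma sum_scaleC_in_cspan: "(\<Sum>i\<in>I. c i *\<^sub>C e i) \<in> cspan (e ` I)"
  by (intro csubspace_sum_scaleC csubspace_cspan subsetD[OF cspan_superset]) auto

lemma cspan_insert_cong:
  assumes "cspan S = cspan T"
  shows "cspan (insert a S) = cspan (insert a T)"
proof -
  have "cspan (insert a S) \<subseteq> cspan (insert a T)"
    if "cspan S \<subseteq> cspan T" for S T :: "'a set"
  proof (rule cspan_minimal[OF csubspace_cspan])
    show "insert a S \<subseteq> cspan (insert a T)"
      using that cspan_superset[of S] cspan_superset[of "insert a T"] cspan_mono[of T "insert a T"]
      by blast
  qed
  with assms show ?thesis by blast
qed

lemma cspan_insertE:
  assumes "y \<in> cspan (insert a F)"
  obtains \<alpha> u where "u \<in> cspan F" "y = \<alpha> *\<^sub>C a + u"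
proof -
  obtain T c where T: "finite T" "T \<subseteq> insert a F" "y = (\<Sum>t\<in>T. c t *\<^sub>C t)"
    using assms by (rule cspanE)
  have u: "(\<Sum>t\<in>T - {a}. c t *\<^sub>C t) \<in> cspan F"
    using T by (intro cspanI[of "T - {a}"]) auto
  have "y = (if a \<in> T then c a else 0) *\<^sub>C a + (\<Sum>t\<in>T - {a}. c t *\<^sub>C t)"
    using T by (simp add: sum.remove)
  with u that show ?thesis by blast
qed

text \<open>\<open>v\<^sub>0 \<notin> cspan F\<close> means that \<open>v\<^sub>0\<close> has a nonzero \<open>a\<close>-component, so it can replace \<open>a\<close>.\<close>
lemma cspan_insert_exchange:
  assumes V: "csubspace V" "V \<subseteq> cspan (insert a F)"
    and v\<^sub>0: "v\<^sub>0 \<in> V" "v\<^sub>0 \<notin> cspan F"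
    and S: "cspan S = V \<inter> cspan F"
  shows "cspan (insert v\<^sub>0 S) = V"
proof
  obtain \<alpha> u\<^sub>0 where u\<^sub>0: "u\<^sub>0 \<in> cspan F" "v\<^sub>0 = \<alpha> *\<^sub>C a + u\<^sub>0"
    using cspan_insertE[of v\<^sub>0 a F] v\<^sub>0 V by blast
  have "\<alpha> \<noteq> 0"
    using u\<^sub>0 v\<^sub>0 by (metis add_0 scaleC_zero_left)
  show "V \<subseteq> cspan (insert v\<^sub>0 S)"
  proof
    fix v assume v: "v \<in> V"
    obtain \<beta> u where u: "u \<in> cspan F" "v = \<beta> *\<^sub>C a + u"
      using cspan_insertE[of v a F] v V by blast
    define w where "w = v - (\<beta> / \<alpha>) *\<^sub>C v\<^sub>0"
    have "w = u - (\<beta> / \<alpha>) *\<^sub>C u\<^sub>0"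
      using \<open>\<alpha> \<noteq> 0\<close> unfolding w_def u u\<^sub>0 by (simp add: scaleC_add_right scaleC_scaleC)
    then have "w \<in> cspan F"
      using u u\<^sub>0 csubspace_cspan[of F] by (simp add: csubspace_diff csubspace_scaleC)
    moreover have "w \<in> V"
      using v v\<^sub>0 V(1) unfolding w_def by (simp add: csubspace_diff csubspace_scaleC)
    ultimately have "w \<in> cspan (insert v\<^sub>0 S)"
      using S cspan_mono[of S "insert v\<^sub>0 S"] by blast
    moreover have "(\<beta> / \<alpha>) *\<^sub>C v\<^sub>0 \<in> cspan (insert v\<^sub>0 S)"
      by (meson csubspace_cspan csubspace_scaleC cspan_superset insertI1 subsetD)
    ultimately have "w + (\<beta> / \<alpha>) *\<^sub>C v\<^sub>0 \<in> cspan (insert v\<^sub>0 S)"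
      by (rule csubspace_add[OF csubspace_cspan])
    then show "v \<in> cspan (insert v\<^sub>0 S)"
      unfolding w_def by simp
  qed
  show "cspan (insert v\<^sub>0 S) \<subseteq> V"
    using S v\<^sub>0 V(1) cspan_superset[of S] by (intro cspan_minimal) auto
qed

lemma cfinite_dim_subspace:
  assumes "finite F" "csubspace V" "V \<subseteq> cspan F"
  shows "cfinite_dim V"
  using assms
proof (induction F arbitrary: V rule: finite_induct)
  case empty
  have "cspan {} = {0}"
    using csubspace_0[OF csubspace_cspan, of "{}"] by (auto elim!: cspanE)
  moreover from this have "V = {0}"
    using empty csubspace_0[of V] by blast
  ultimately show ?case
    unfolding cfinite_dim_def by (metis finite.emptyI)
next
  case (insert a F)
  show ?case
  proof (cases "V \<subseteq> cspan F")
    case True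
    then show ?thesis
      using insert.IH[OF insert.prems(1)] by blast
  next
    case False
    then obtain v\<^sub>0 where v\<^sub>0: "v\<^sub>0 \<in> V" "v\<^sub>0 \<notin> cspan F"
      by auto
    have "csubspace (V \<inter> cspan F)"
      using insert.prems(1) csubspace_cspan[of F] unfolding csubspace_def by blast
    then have "cfinite_dim (V \<inter> cspan F)"
      by (rule insert.IH) blast
    then obtain S where "finite S" "cspan S = V \<inter> cspan F"
      unfolding cfinite_dim_def by blast
    with cspan_insert_exchange[OF insert.prems v\<^sub>0] show ?thesis
      unfolding cfinite_dim_def by (metis finite_insert)
  qed
qed

definition clinear :: "('a::complex_inner \<Rightarrow> 'b::complex_inner) \<Rightarrow> bool" where
  "clinear T \<longleftrightarrow> (\<forall>x y. T (x + y) = T x + T y) \<and> (\<forall>a x. T (a *\<^sub>C x) = a *\<^sub>C T x)"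

lemma clinearI:
  "(\<And>x y. T (x + y) = T x + T y) \<Longrightarrow> (\<And>a x. T (a *\<^sub>C x) = a *\<^sub>C T x) \<Longrightarrow> clinear T"
  unfolding clinear_def by blast

context
  fixes T :: "'a::complex_inner \<Rightarrow> 'b::complex_inner"
  assumes T: "clinear T"
begin

lemma clinear_add: "T (x + y) = T x + T y"
  using T unfolding clinear_def by blast

lemma clinear_scaleC: "T (a *\<^sub>C x) = a *\<^sub>C T x"
  using T unfolding clinear_def by blast

lemma clinear_0: "T 0 = 0"
  using clinear_add[of 0 0] by simp

lemma clinear_diff: "T (x - y) = T x - T y"
  using clinear_add[of "x - y" y] by simp

lemma clinear_sum: "T (\<Sum>i\<in>I. g i) = (\<Sum>i\<in>I. T (g i))"
  by (induction I rule: infinite_finite_induct) (auto simp: clinear_0 clinear_add)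

lemma csubspace_range: "csubspace (range T)"
  unfolding csubspace_def
proof (intro conjI ballI allI, safe)
  show "0 \<in> range T"
    using clinear_0 by (intro range_eqI[of _ _ 0]) simp
  show "T x + T y \<in> range T" for x y
    by (rule range_eqI[of _ _ "x + y"]) (simp add: clinear_add)
  show "a *\<^sub>C T x \<in> range T" for a x
    by (rule range_eqI[of _ _ "a *\<^sub>C x"]) (simp add: clinear_scaleC)
qed

lemma csubspace_kernel: "csubspace {x. T x = 0}"
  unfolding csubspace_def by (simp add: clinear_0 clinear_add clinear_scaleC)

lemma clinear_image_cspan: "v \<in> cspan S \<Longrightarrow> T v \<in> cspan (T ` S)"
proof (elim cspanE)
  fix U c assume "finite U" "U \<subseteq> S" "v = (\<Sum>t\<in>U. c t *\<^sub>C t)"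
  then have "T v = (\<Sum>t\<in>U. c t *\<^sub>C T t)"
    by (simp add: clinear_sum clinear_scaleC)
  also have "\<dots> \<in> cspan (T ` S)"
    using \<open>U \<subseteq> S\<close> cspan_superset[of "T ` S"]
    by (intro csubspace_sum_scaleC[OF csubspace_cspan]) auto
  finally show "T v \<in> cspan (T ` S)" .
qed

end

lemma clinear_id_minus: "clinear T \<Longrightarrow> clinear (\<lambda>x. x - T x)"
  by (rule clinearI) (simp_all add: clinear_add clinear_scaleC scaleC_diff_right)

section \<open>Bessel sequences and the frame operator\<close>

definition bessel_sequence :: "(nat \<Rightarrow> 'a::complex_inner) \<Rightarrow> real \<Rightarrow> bool" where
  "bessel_sequence f B \<longleftrightarrow> 0 \<le> B \<and> (\<forall>x. summable (\<lambda>n. (cmod (cinner x (f n)))\<^sup>2) \<and>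
      (\<Sum>n. (cmod (cinner x (f n)))\<^sup>2) \<le> B * (norm x)\<^sup>2)"

lemma is_frameE:
  assumes "is_frame f"
  obtains A B where "0 < A" "bessel_sequence f B"
    "\<And>x. A * (norm x)\<^sup>2 \<le> (\<Sum>n. (cmod (cinner x (f n)))\<^sup>2)"
  using assms unfolding is_frame_def bessel_sequence_def by (meson less_le_trans less_imp_le)

lemma parseval_bessel_sequence: "is_parseval_frame h \<Longrightarrow> bessel_sequence h 1"
  unfolding is_parseval_frame_def bessel_sequence_def by simp

lemma cmod_sum_mult_le:
  "cmod (\<Sum>n\<in>A. a n * b n) \<le> sqrt (\<Sum>n\<in>A. (cmod (a n))\<^sup>2) * sqrt (\<Sum>n\<in>A. (cmod (b n))\<^sup>2)"
proof -
  have "cmod (\<Sum>n\<in>A. a n * b n) \<le> (\<Sum>n\<in>A. \<bar>cmod (a n)\<bar> * \<bar>cmod (b n)\<bar>)"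
    by (simp add: norm_mult sum_norm_le)
  also have "\<dots> \<le> L2_set (\<lambda>n. cmod (a n)) A * L2_set (\<lambda>n. cmod (b n)) A"
    by (rule L2_set_mult_ineq)
  finally show ?thesis
    unfolding L2_set_def by simp
qed

context
  fixes f :: "nat \<Rightarrow> 'a::complex_inner" and B :: real
  assumes bessel: "bessel_sequence f B"
begin

lemma bessel_bound_nonneg: "0 \<le> B"
  using bessel by (simp add: bessel_sequence_def)

lemma bessel_summable: "summable (\<lambda>n. (cmod (cinner x (f n)))\<^sup>2)"
  using bessel by (simp add: bessel_sequence_def)

lemma bessel_suminf_le: "(\<Sum>n. (cmod (cinner x (f n)))\<^sup>2) \<le> B * (norm x)\<^sup>2"
  using bessel by (simp add: bessel_sequence_def)

text \<open>The synthesis operator is bounded by \<open>\<surd>B\<close>: pair \<open>v = \<Sum> c\<^sub>n f\<^sub>n\<close> with itself and apply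
  Cauchy--Schwarz in \<open>\<ell>\<^sup>2\<close> and the Bessel bound to the coefficients \<open>\<langle>v, f\<^sub>n\<rangle>\<close>.\<close>
lemma norm_sum_scaleC_le: "norm (\<Sum>n\<in>A. c n *\<^sub>C f n) \<le> sqrt B * sqrt (\<Sum>n\<in>A. (cmod (c n))\<^sup>2)"
proof (cases "finite A")
  case True
  define v where "v = (\<Sum>n\<in>A. c n *\<^sub>C f n)"
  define s where "s = sqrt (\<Sum>n\<in>A. (cmod (c n))\<^sup>2)"
  have "(norm v)\<^sup>2 = cmod (cinner v v)"
    by (metis cinner_self norm_of_real abs_of_nonneg zero_le_power2)
  also have "cinner v v = (\<Sum>n\<in>A. c n * cinner (f n) v)"
    unfolding v_def by (simp add: cinner.sum_left cinner_scaleC_left)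
  also have "cmod \<dots> \<le> s * sqrt (\<Sum>n\<in>A. (cmod (cinner v (f n)))\<^sup>2)"
    using cmod_sum_mult_le[of c "\<lambda>n. cinner (f n) v" A]
    by (simp add: s_def cinner_commute[of "f _" v])
  also have "\<dots> \<le> s * sqrt (B * (norm v)\<^sup>2)"
  proof -
    have "(\<Sum>n\<in>A. (cmod (cinner v (f n)))\<^sup>2) \<le> (\<Sum>n. (cmod (cinner v (f n)))\<^sup>2)"
      using True bessel_summable by (intro sum_le_suminf) auto
    then show ?thesis
      using bessel_suminf_le[of v] by (intro mult_left_mono) (auto simp: s_def sum_nonneg)
  qed
  also have "\<dots> = (s * sqrt B) * norm v"
    by (simp add: real_sqrt_mult)
  finally have "norm v * norm v \<le> (s * sqrt B) * norm v"
    by (simp add: power2_eq_square)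
  then have "norm v \<le> s * sqrt B"
    using bessel_bound_nonneg by (cases "v = 0") (auto simp: s_def sum_nonneg)
  then show ?thesis
    by (simp add: v_def s_def mult.commute)
qed (simp add: bessel_bound_nonneg)

end

context
  fixes f :: "nat \<Rightarrow> 'a::chilbert_space" and B :: real
  assumes bessel: "bessel_sequence f B"
begin

lemma bessel_synthesis_summable:
  assumes c: "summable (\<lambda>n. (cmod (c n))\<^sup>2)"
  shows "summable (\<lambda>n. c n *\<^sub>C f n)"
  unfolding summable_Cauchy
proof (intro allI impI)
  fix e :: real assume "e > 0"
  define k where "k = sqrt B + 1"
  have "k > 0"
    using bessel_bound_nonneg[OF bessel] by (simp add: k_def add_nonneg_pos)
  with \<open>e > 0\<close> obtain N where N: "\<forall>m\<ge>N. \<forall>n. norm (\<Sum>i\<in>{m..<n}. (cmod (c i))\<^sup>2) < (e / k)\<^sup>2"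
    using c unfolding summable_Cauchy by (meson divide_pos_pos zero_less_power)
  show "\<exists>N. \<forall>m\<ge>N. \<forall>n. norm (\<Sum>i\<in>{m..<n}. c i *\<^sub>C f i) < e"
  proof (intro exI allI impI)
    fix m n assume "m \<ge> N"
    have "(\<Sum>i\<in>{m..<n}. (cmod (c i))\<^sup>2) < (e / k)\<^sup>2"
      using N \<open>m \<ge> N\<close> by (simp add: sum_nonneg)
    then have "sqrt (\<Sum>i\<in>{m..<n}. (cmod (c i))\<^sup>2) < e / k"
      using \<open>e > 0\<close> \<open>k > 0\<close> by (simp add: real_less_lsqrt sum_nonneg)
    then have "sqrt B * sqrt (\<Sum>i\<in>{m..<n}. (cmod (c i))\<^sup>2) \<le> sqrt B * (e / k)"
      using bessel_bound_nonneg[OF bessel] by (intro mult_left_mono) auto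
    also have "\<dots> < e"
      using \<open>e > 0\<close> \<open>k > 0\<close> by (simp add: k_def field_simps)
    finally show "norm (\<Sum>i\<in>{m..<n}. c i *\<^sub>C f i) < e"
      using norm_sum_scaleC_le[OF bessel, of c "{m..<n}"] by linarith
  qed
qed

lemma norm_bessel_synthesis_le:
  assumes c: "summable (\<lambda>n. (cmod (c n))\<^sup>2)"
  shows "norm (\<Sum>n. c n *\<^sub>C f n) \<le> sqrt B * sqrt (\<Sum>n. (cmod (c n))\<^sup>2)"
proof (rule LIMSEQ_le_const2)
  show "(\<lambda>N. norm (\<Sum>n<N. c n *\<^sub>C f n)) \<longlonglongrightarrow> norm (\<Sum>n. c n *\<^sub>C f n)"
    by (intro tendsto_norm summable_LIMSEQ bessel_synthesis_summable c)
  have "norm (\<Sum>n<N. c n *\<^sub>C f n) \<le> sqrt B * sqrt (\<Sum>n. (cmod (c n))\<^sup>2)" for N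
    using norm_sum_scaleC_le[OF bessel, of c "{..<N}"] sum_le_suminf[OF c, of "{..<N}"] bessel_bound_nonneg[OF bessel]
    by (smt (verit, best) finite_lessThan mult_left_mono real_sqrt_ge_zero real_sqrt_le_mono
        zero_le_power2)
  then show "\<exists>N. \<forall>N'\<ge>N. norm (\<Sum>n<N'. c n *\<^sub>C f n) \<le> sqrt B * sqrt (\<Sum>n. (cmod (c n))\<^sup>2)"
    by blast
qed

lemma frame_op_sums: "(\<lambda>n. cinner x (f n) *\<^sub>C f n) sums frame_op f x"
  unfolding frame_op_def by (rule summable_sums[OF bessel_synthesis_summable[OF bessel_summable[OF bessel]]])

lemma frame_op_cinner_sums: "(\<lambda>n. cinner x (f n) * cinner (f n) y) sums cinner (frame_op f x) y"
  using bounded_linear.sums[OF bounded_linear_cinner_left frame_op_sums[of x], of y]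
  by (simp add: cinner_scaleC_left)

lemma clinear_frame_op: "clinear (frame_op f)"
proof (rule clinearI)
  show "frame_op f (x + y) = frame_op f x + frame_op f y" for x y
    using sums_add[OF frame_op_sums[of x] frame_op_sums[of y]] frame_op_sums[of "x + y"]
    by (simp add: cinner_add_left scaleC_add_left sums_unique2)
  show "frame_op f (a *\<^sub>C x) = a *\<^sub>C frame_op f x" for a x
    using bounded_linear.sums[OF bounded_linear_scaleC frame_op_sums[of x], of a]
      frame_op_sums[of "a *\<^sub>C x"]
    by (simp add: cinner_scaleC_left scaleC_scaleC sums_unique2)
qed

lemma bounded_linear_frame_op: "bounded_linear (frame_op f)"
proof (rule bounded_linear_intro[where K=B])
  show "norm (frame_op f x) \<le> norm x * B" for x
  proof -
    have "norm (frame_op f x) \<le> sqrt B * sqrt (B * (norm x)\<^sup>2)"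
      unfolding frame_op_def using norm_bessel_synthesis_le[OF bessel_summable[OF bessel], of x]
        bessel_suminf_le[OF bessel, of x] bessel_bound_nonneg[OF bessel]
      by (smt (verit) mult_left_mono real_sqrt_ge_zero real_sqrt_le_mono)
    then show ?thesis
      using bessel_bound_nonneg[OF bessel] by (simp add: real_sqrt_mult mult.assoc[symmetric] mult.commute)
  qed
qed (simp_all add: clinear_add[OF clinear_frame_op] clinear_scaleC[OF clinear_frame_op] scaleR_scaleC)

lemma cinner_frame_op_commute: "cinner (frame_op f x) y = cinner x (frame_op f y)"
proof -
  have "(\<lambda>n. cinner x (f n) * cinner (f n) y) sums cinner x (frame_op f y)"
    using sums_cnj[THEN iffD2, OF frame_op_cinner_sums[of y x]]
    by (simp add: cinner_commute[of _ y] cinner_commute[of x] mult.commute)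
  then show ?thesis
    using frame_op_cinner_sums[of x y] by (simp add: sums_unique2)
qed

lemma cinner_frame_op_self: "cinner (frame_op f x) x = of_real (\<Sum>n. (cmod (cinner x (f n)))\<^sup>2)"
proof -
  have "(\<lambda>n. cinner x (f n) * cinner (f n) x) sums of_real (\<Sum>n. (cmod (cinner x (f n)))\<^sup>2)"
    using sums_of_real[OF summable_sums[OF bessel_summable[OF bessel, of x]], where 'a=complex]
    by (simp add: cinner_commute[of "f _" x] cmod_squared)
  then show ?thesis
    using frame_op_cinner_sums[of x x] by (simp add: sums_unique2)
qed

end

lemma clinear_eq_0_if_cinner_self_eq_0:
  fixes T :: "'a::complex_inner \<Rightarrow> 'a"
  assumes "clinear T" and self: "\<And>x. cinner (T x) x = 0"
  shows "T x = 0"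
proof -
  have polar: "cinner (T x) y + cinner (T y) x = 0" for x y
    using self[of "x + y"] self[of x] self[of y]
    by (simp add: clinear_add[OF assms(1)] cinner_add_left cinner.add_right add.commute)
  \<comment> \<open>polarizing with \<open>\<i> y\<close> as well gives \<open>\<langle>T x, y\<rangle> = \<langle>T y, x\<rangle>\<close>, so \<open>\<langle>T x, y\<rangle> = 0\<close>\<close>
  have "cinner (T x) y = cinner (T y) x" for y
    using polar[of x "\<i> *\<^sub>C y"]
    by (simp add: clinear_scaleC[OF assms(1)] cinner_scaleC_left cinner.scale_right algebra_simps)
  with polar[of x "T x"] have "cinner (T x) (T x) = 0"
    by simp
  then show ?thesis
    by simp
qed

lemma frame_op_parseval_frame:
  fixes h :: "nat \<Rightarrow> 'a::chilbert_space"
  assumes "is_parseval_frame h"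
  shows "frame_op h x = x"
proof -
  note bessel = parseval_bessel_sequence[OF assms]
  have "x - frame_op h x = 0"
  proof (rule clinear_eq_0_if_cinner_self_eq_0[where T="\<lambda>x. x - frame_op h x"])
    show "clinear (\<lambda>x. x - frame_op h x)"
      by (rule clinear_id_minus[OF clinear_frame_op[OF bessel]])
    show "cinner (x - frame_op h x) x = 0" for x
      using assms by (simp add: cinner.diff_left cinner_frame_op_self[OF bessel] cinner_self
          is_parseval_frame_def)
  qed
  then show ?thesis
    by simp
qed

section \<open>Gram--Schmidt orthonormalization\<close>

context inner_product_form
begin

text \<open>Zero members are allowed: Gram--Schmidt turns a vector that depends linearly on its
  predecessors into \<open>0\<close>, which keeps the new family indexed like the old one.\<close>
definition orthonormal :: "(nat \<Rightarrow> 'a) \<Rightarrow> nat \<Rightarrow> bool" where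
  "orthonormal w N \<longleftrightarrow> (\<forall>i<N. \<forall>j<N. \<phi> (w i) (w j) = (if i = j \<and> w i \<noteq> 0 then 1 else 0))"

definition normalized :: "'a \<Rightarrow> 'a" where
  "normalized z = of_real (1 / sqrt (Re (\<phi> z z))) *\<^sub>C z"

lemma self_pos: "z \<noteq> 0 \<Longrightarrow> 0 < Re (\<phi> z z)"
  using nonneg[of z] self_eq_of_real[of z] by (metis less_eq_real_def of_real_0 self_eq_0_iff)

lemma normalized_eq_0_iff [simp]: "normalized z = 0 \<longleftrightarrow> z = 0"
  by (cases "z = 0") (use self_pos[of z] in \<open>auto simp: normalized_def scaleC_eq_0_iff\<close>)

lemma normalized_self:
  assumes "z \<noteq> 0"
  shows "\<phi> (normalized z) (normalized z) = 1"
proof -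
  define s where "s = sqrt (Re (\<phi> z z))"
  have "s > 0"
    using self_pos[OF assms] by (simp add: s_def)
  moreover have "\<phi> z z = of_real (s * s)"
    using self_eq_of_real[of z] nonneg[of z] by (simp add: s_def)
  ultimately show ?thesis
    by (simp add: normalized_def scale_left scale_right s_def[symmetric] field_simps)
qed

lemma scaleC_normalized: "of_real (sqrt (Re (\<phi> z z))) *\<^sub>C normalized z = z"
  using self_pos[of z] by (cases "z = 0") (simp_all add: normalized_def scaleC_scaleC scaleC_one
      flip: of_real_mult)

lemma cspan_orthogonal_left:
  assumes "v \<in> cspan A" "\<And>a. a \<in> A \<Longrightarrow> \<phi> a w = 0"
  shows "\<phi> v w = 0"
  using assms(1)
proof (rule cspanE)
  fix T c assume "T \<subseteq> A" "v = (\<Sum>t\<in>T. c t *\<^sub>C t)"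
  moreover from this have "\<forall>t\<in>T. \<phi> t w = 0"
    using assms(2) by blast
  ultimately show ?thesis
    by (simp add: sum_left scale_left)
qed

lemma cspan_orthogonal_right:
  assumes "v \<in> cspan A" "\<And>a. a \<in> A \<Longrightarrow> \<phi> w a = 0"
  shows "\<phi> w v = 0"
proof -
  have "\<phi> v w = 0"
    using assms(1) by (rule cspan_orthogonal_left) (metis assms(2) commute complex_cnj_zero)
  then show ?thesis
    by (metis commute complex_cnj_zero)
qed

context
  fixes e :: "nat \<Rightarrow> 'a" and N :: nat
  assumes orth: "orthonormal e N"
begin

lemma orthonormal_residual: "j < N \<Longrightarrow> \<phi> (x - (\<Sum>i<N. \<phi> x (e i) *\<^sub>C e i)) (e j) = 0"
proof -
  assume "j < N"
  then have "\<phi> (\<Sum>i<N. \<phi> x (e i) *\<^sub>C e i) (e j) = (\<Sum>i<N. if i = j then \<phi> x (e j) else 0)"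
    using orth unfolding orthonormal_def sum_left scale_left by (intro sum.cong) auto
  then show ?thesis
    using \<open>j < N\<close> by (simp add: diff_left)
qed

lemma orthonormal_sum_sum:
  assumes "\<And>i. i < N \<Longrightarrow> e i = 0 \<Longrightarrow> c i = 0"
  shows "\<phi> (\<Sum>i<N. c i *\<^sub>C e i) (\<Sum>j<N. d j *\<^sub>C e j) = (\<Sum>i<N. c i * cnj (d i))"
proof -
  have "\<phi> (\<Sum>i<N. c i *\<^sub>C e i) (\<Sum>j<N. d j *\<^sub>C e j)
      = (\<Sum>i<N. \<Sum>j<N. c i * cnj (d j) * \<phi> (e i) (e j))"
    by (simp add: sum_left sum_right scale_left scale_right sum_distrib_left)
      (subst sum.swap, simp add: mult_ac)
  also have "\<dots> = (\<Sum>i<N. \<Sum>j<N. if j = i then c i * cnj (d i) else 0)"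
    using assms orth unfolding orthonormal_def by (intro sum.cong refl) auto
  finally show ?thesis
    by simp
qed

lemma orthonormal_pythagoras:
  fixes x :: 'a
  defines "p \<equiv> \<Sum>i<N. \<phi> x (e i) *\<^sub>C e i"
  shows "\<phi> x x = (\<Sum>i<N. \<phi> x (e i) * cnj (\<phi> x (e i))) + \<phi> (x - p) (x - p)"
proof -
  have "\<phi> p (x - p) = 0"
    unfolding p_def
  proof (rule cspan_orthogonal_left[OF sum_scaleC_in_cspan])
    show "\<phi> a (x - (\<Sum>i<N. \<phi> x (e i) *\<^sub>C e i)) = 0" if "a \<in> e ` {..<N}" for a
      using that orthonormal_residual commute[of a] by auto
  qed
  moreover have "\<phi> p p = (\<Sum>i<N. \<phi> x (e i) * cnj (\<phi> x (e i)))"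
    unfolding p_def by (rule orthonormal_sum_sum) simp
  moreover have "\<phi> x x = \<phi> (p + (x - p)) (p + (x - p))"
    by simp
  ultimately show ?thesis
    using commute[of "x - p" p] by (simp only: add_left add_right) simp
qed

lemma orthonormal_not_in_cspan:
  assumes "i < N" "e i \<noteq> 0"
  shows "e i \<notin> cspan (e ` {..<i})"
proof
  assume "e i \<in> cspan (e ` {..<i})"
  then have "\<phi> (e i) (e i) = 0"
    by (rule cspan_orthogonal_left) (use orth \<open>i < N\<close> in \<open>auto simp: orthonormal_def\<close>)
  with \<open>e i \<noteq> 0\<close> show False
    by simp
qed

lemma gram_schmidt_step:
  fixes x :: 'a
  defines "v \<equiv> normalized (x - (\<Sum>j<N. \<phi> x (e j) *\<^sub>C e j))"
  shows "orthonormal (e(N := v)) (Suc N)"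
    and "cspan (insert v (e ` {..<N})) = cspan (insert x (e ` {..<N}))"
    and "v = 0 \<Longrightarrow> x \<in> cspan (e ` {..<N})"
proof -
  define p where "p = (\<Sum>j<N. \<phi> x (e j) *\<^sub>C e j)"
  define r where "r = sqrt (Re (\<phi> (x - p) (x - p)))"
  have v_orth: "\<phi> v (e j) = 0" if "j < N" for j
    using orthonormal_residual[OF that, of x] by (simp add: v_def normalized_def scale_left)
  have x: "x = of_real r *\<^sub>C v + p"
    using scaleC_normalized[of "x - p"] by (simp add: v_def p_def r_def)
  have p: "p \<in> cspan (e ` {..<N})"
    unfolding p_def by (rule sum_scaleC_in_cspan)
  show "orthonormal (e(N := v)) (Suc N)"
    using orth v_orth normalized_self[of "x - p"] commute[of "e _" v]
    unfolding orthonormal_def by (auto simp: less_Suc_eq v_def p_def)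
  have "insert v (e ` {..<N}) \<subseteq> cspan (insert x (e ` {..<N}))"
  proof -
    have "x - p \<in> cspan (insert x (e ` {..<N}))"
      using p cspan_superset[of "insert x (e ` {..<N})"]
        cspan_mono[of "e ` {..<N}" "insert x (e ` {..<N})"]
      by (intro csubspace_diff[OF csubspace_cspan]) auto
    then show ?thesis
      unfolding v_def normalized_def p_def[symmetric]
      using cspan_superset[of "insert x (e ` {..<N})"]
      by (auto intro: csubspace_scaleC[OF csubspace_cspan])
  qed
  moreover have "insert x (e ` {..<N}) \<subseteq> cspan (insert v (e ` {..<N}))"
  proof -
    have "x \<in> cspan (insert v (e ` {..<N}))"
      using p cspan_superset[of "insert v (e ` {..<N})"]
        cspan_mono[of "e ` {..<N}" "insert v (e ` {..<N})"] unfolding x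
      by (intro csubspace_add[OF csubspace_cspan] csubspace_scaleC[OF csubspace_cspan]) auto
    then show ?thesis
      using cspan_superset[of "insert v (e ` {..<N})"] by auto
  qed
  ultimately show "cspan (insert v (e ` {..<N})) = cspan (insert x (e ` {..<N}))"
    by (intro subset_antisym cspan_minimal[OF csubspace_cspan])
  show "x \<in> cspan (e ` {..<N})" if "v = 0"
    using x p that by simp
qed

end

lemma gram_schmidt_Suc:
  fixes x y :: "nat \<Rightarrow> 'a"
  assumes y: "orthonormal y n" "\<forall>m\<le>n. cspan (y ` {..<m}) = cspan (x ` {..<m})"
    "\<forall>i<n. x i \<notin> cspan (x ` {..<i}) \<longrightarrow> y i \<noteq> 0"
  defines "y' \<equiv> y(n := normalized (x n - (\<Sum>j<n. \<phi> (x n) (y j) *\<^sub>C y j)))"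
  shows "orthonormal y' (Suc n)" "\<forall>m\<le>Suc n. cspan (y' ` {..<m}) = cspan (x ` {..<m})"
    "\<forall>i<Suc n. x i \<notin> cspan (x ` {..<i}) \<longrightarrow> y' i \<noteq> 0"
proof -
  note step = gram_schmidt_step[OF y(1), of "x n", folded y'_def]
  show "orthonormal y' (Suc n)"
    by (rule step(1))
  have image: "y' ` {..<m} = y ` {..<m}" if "m \<le> n" for m
    using that by (auto simp: y'_def)
  have "y' ` {..<Suc n} = insert (y' n) (y ` {..<n})"
    unfolding lessThan_Suc image_insert image[OF order_refl] ..
  then have "cspan (y' ` {..<Suc n}) = cspan (insert (x n) (y ` {..<n}))"
    using step(2) by (simp add: y'_def)
  also have "\<dots> = cspan (insert (x n) (x ` {..<n}))"
    using y(2) by (intro cspan_insert_cong) simp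
  also have "\<dots> = cspan (x ` {..<Suc n})"
    by (simp add: lessThan_Suc)
  finally have span_Suc: "cspan (y' ` {..<Suc n}) = cspan (x ` {..<Suc n})" .
  show "\<forall>m\<le>Suc n. cspan (y' ` {..<m}) = cspan (x ` {..<m})"
  proof (intro allI impI)
    fix m assume "m \<le> Suc n"
    then consider "m \<le> n" | "m = Suc n"
      by linarith
    then show "cspan (y' ` {..<m}) = cspan (x ` {..<m})"
      by cases (use image y(2) span_Suc in simp_all)
  qed
  show "\<forall>i<Suc n. x i \<notin> cspan (x ` {..<i}) \<longrightarrow> y' i \<noteq> 0"
  proof (intro allI impI)
    fix i assume "i < Suc n" "x i \<notin> cspan (x ` {..<i})"
    then consider "i < n" | "i = n"
      by linarith
    then show "y' i \<noteq> 0"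
      by cases (use \<open>x i \<notin> _\<close> y(3) step(3) y(2)[rule_format, OF order_refl] in
          \<open>auto simp: y'_def\<close>)
  qed
qed

lemma gram_schmidt:
  fixes x :: "nat \<Rightarrow> 'a"
  obtains y where "orthonormal y n"
    and "\<forall>m\<le>n. cspan (y ` {..<m}) = cspan (x ` {..<m})"
    and "\<forall>i<n. x i \<notin> cspan (x ` {..<i}) \<longrightarrow> y i \<noteq> 0"
proof -
  have "\<exists>y. orthonormal y n \<and> (\<forall>m\<le>n. cspan (y ` {..<m}) = cspan (x ` {..<m}))
      \<and> (\<forall>i<n. x i \<notin> cspan (x ` {..<i}) \<longrightarrow> y i \<noteq> 0)"
  proof (induction n)
    case 0
    show ?case
      by (auto simp: orthonormal_def)
  next
    case (Suc n)
    then obtain y where "orthonormal y n" "\<forall>m\<le>n. cspan (y ` {..<m}) = cspan (x ` {..<m})"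
      "\<forall>i<n. x i \<notin> cspan (x ` {..<i}) \<longrightarrow> y i \<noteq> 0"
      by blast
    from gram_schmidt_Suc[OF this] show ?case
      by (intro exI conjI)
  qed
  with that show ?thesis
    by blast
qed

lemma orthonormal_basis:
  assumes "cfinite_dim L"
  obtains e N where "orthonormal e N" "cspan (e ` {..<N}) = L"
proof -
  obtain Q where Q: "finite Q" "cspan Q = L"
    using assms unfolding cfinite_dim_def by blast
  then obtain xs where "set xs = Q"
    using finite_list by blast
  then have xs: "(!) xs ` {..<length xs} = Q"
    by (auto simp: set_conv_nth)
  obtain e where e: "orthonormal e (length xs)"
    and span: "\<forall>m\<le>length xs. cspan (e ` {..<m}) = cspan ((!) xs ` {..<m})"
    and "\<forall>i<length xs. xs ! i \<notin> cspan ((!) xs ` {..<i}) \<longrightarrow> e i \<noteq> 0"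
    by (rule gram_schmidt)
  show ?thesis
    by (rule that[OF e]) (use span[rule_format, OF order_refl] xs Q(2) in simp)
qed

end

section \<open>Frames with a finite-rank frame defect\<close>

lemma inner_product_form_frame_op:
  fixes f :: "nat \<Rightarrow> 'a::chilbert_space"
  assumes "is_frame f"
  shows "inner_product_form (\<lambda>x y. cinner (frame_op f x) y)"
proof -
  obtain A B where "0 < A" and bessel: "bessel_sequence f B"
    and lower: "\<And>x. A * (norm x)\<^sup>2 \<le> (\<Sum>n. (cmod (cinner x (f n)))\<^sup>2)"
    using is_frameE[OF assms] by metis
  show ?thesis
  proof
    fix x y z :: 'a and a :: complex
    show "cinner (frame_op f (x + y)) z = cinner (frame_op f x) z + cinner (frame_op f y) z"
      by (simp add: clinear_add[OF clinear_frame_op[OF bessel]] cinner_add_left)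
    show "cinner (frame_op f (a *\<^sub>C x)) y = a * cinner (frame_op f x) y"
      by (simp add: clinear_scaleC[OF clinear_frame_op[OF bessel]] cinner_scaleC_left)
    show "cinner (frame_op f x) y = cnj (cinner (frame_op f y) x)"
      by (simp add: cinner_frame_op_commute[OF bessel] flip: cinner_commute)
    show "0 \<le> Re (cinner (frame_op f x) x)"
      using bessel_summable[OF bessel]
      by (simp add: cinner_frame_op_self[OF bessel] suminf_nonneg)
  next
    fix x :: 'a
    assume "cinner (frame_op f x) x = 0"
    then have "A * (norm x)\<^sup>2 \<le> 0"
      using lower[of x] by (simp add: cinner_frame_op_self[OF bessel])
    with \<open>0 < A\<close> show "x = 0"
      by (simp add: mult_le_0_iff)
  qed
qed

text \<open>Since \<open>T = I - S\<close> is self-adjoint, \<open>q \<perp> range T\<close> gives \<open>\<parallel>T q\<parallel>\<^sup>2 = \<langle>q, T (T q)\<rangle> = 0\<close>.\<close>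
lemma frame_op_fixes_orthogonal_complement_of_defect:
  fixes f :: "nat \<Rightarrow> 'a::chilbert_space"
  assumes bessel: "bessel_sequence f B"
    and q: "\<And>k. k \<in> range (\<lambda>x. x - frame_op f x) \<Longrightarrow> cinner q k = 0"
  shows "frame_op f q = q"
proof -
  define t where "t = q - frame_op f q"
  have "cinner t t = cinner q (t - frame_op f t)"
    by (simp add: t_def cinner.diff_left cinner.diff_right cinner_frame_op_commute[OF bessel]
        clinear_diff[OF clinear_frame_op[OF bessel]])
  also have "\<dots> = 0"
    using q by simp
  finally show ?thesis
    by (simp add: t_def)
qed

lemma finite_rank_defect_if_finite_codim_reconstruction:
  fixes f :: "nat \<Rightarrow> 'a::chilbert_space"
  assumes bessel: "bessel_sequence f B"
    and "finite_codim M" and M: "\<forall>x\<in>M. ((\<lambda>n. cinner x (f n) *\<^sub>C f n) sums x)"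
  shows "cfinite_dim (range (\<lambda>x. x - frame_op f x))"
proof -
  let ?T = "\<lambda>x. x - frame_op f x"
  have T: "clinear ?T"
    by (rule clinear_id_minus[OF clinear_frame_op[OF bessel]])
  obtain F where "finite F" and F: "\<forall>x. \<exists>m\<in>M. x - m \<in> cspan F"
    using \<open>finite_codim M\<close> unfolding finite_codim_def by blast
  have T_M: "?T m = 0" if "m \<in> M" for m
    using sums_unique2[OF frame_op_sums[OF bessel, of m]] M that by force
  have "range ?T \<subseteq> cspan (?T ` F)"
  proof (rule image_subsetI)
    fix x
    obtain m where "m \<in> M" "x - m \<in> cspan F"
      using F by blast
    then have "?T (x - m) \<in> cspan (?T ` F)"
      by (intro clinear_image_cspan[OF T])
    then show "?T x \<in> cspan (?T ` F)"
      using T_M[OF \<open>m \<in> M\<close>] by (simp add: clinear_diff[OF T] del: diff_diff_eq)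
  qed
  moreover have "cspan (?T ` F) \<subseteq> range ?T"
    by (rule cspan_minimal[OF csubspace_range[OF T]]) auto
  ultimately show ?thesis
    unfolding cfinite_dim_def using \<open>finite F\<close> by blast
qed

text \<open>The kernel of \<open>I - S\<close> works as \<open>M\<close>: a basis of \<open>range (I - S)\<close> pulled back along
  \<open>I - S\<close> spans a complement of it.\<close>
lemma finite_codim_reconstruction_if_finite_rank_defect:
  fixes f :: "nat \<Rightarrow> 'a::chilbert_space"
  assumes bessel: "bessel_sequence f B"
    and "cfinite_dim (range (\<lambda>x. x - frame_op f x))"
  shows "\<exists>M. csubspace M \<and> closed M \<and> finite_codim M \<and> (\<forall>x\<in>M. ((\<lambda>n. cinner x (f n) *\<^sub>C f n) sums x))"
proof -
  let ?T = "\<lambda>x. x - frame_op f x"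
  have T: "clinear ?T"
    by (rule clinear_id_minus[OF clinear_frame_op[OF bessel]])
  define M where "M = {x. ?T x = 0}"
  obtain R where "finite R" and R: "cspan R = range ?T"
    using assms(2) unfolding cfinite_dim_def by blast
  have "\<forall>r\<in>R. \<exists>x. ?T x = r"
    using cspan_superset[of R] unfolding R by blast
  then obtain p where p: "\<And>r. r \<in> R \<Longrightarrow> ?T (p r) = r"
    by metis
  have "closed M"
    unfolding M_def using linear_continuous_on[OF bounded_linear_frame_op[OF bessel]]
    by (intro closed_Collect_eq continuous_intros) auto
  moreover have "finite_codim M"
    unfolding finite_codim_def
  proof (intro exI[of _ "p ` R"] conjI allI)
    fix x
    obtain U c where U: "finite U" "U \<subseteq> R" "?T x = (\<Sum>t\<in>U. c t *\<^sub>C t)"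
      using R cspanE[of "?T x" R] by blast
    define m where "m = x - (\<Sum>t\<in>U. c t *\<^sub>C p t)"
    have "?T m = ?T x - (\<Sum>t\<in>U. c t *\<^sub>C ?T (p t))"
      by (simp add: m_def clinear_diff[OF T] clinear_sum[OF T] clinear_scaleC[OF T] del: diff_diff_eq)
    then have "m \<in> M"
      using U p by (simp add: M_def subset_iff)
    moreover have "x - m \<in> cspan (p ` R)"
      unfolding m_def using U(2) cspan_superset[of "p ` R"]
      by (auto intro!: csubspace_sum_scaleC[OF csubspace_cspan])
    ultimately show "\<exists>m\<in>M. x - m \<in> cspan (p ` R)"
      by blast
  qed (use \<open>finite R\<close> in simp)
  moreover have "(\<lambda>n. cinner x (f n) *\<^sub>C f n) sums x" if "x \<in> M" for x
    using frame_op_sums[OF bessel, of x] that by (simp add: M_def)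
  ultimately show ?thesis
    using csubspace_kernel[OF T] unfolding M_def by blast
qed

text \<open>For such \<open>q\<close> and \<open>y\<close>, the frames \<open>f + g\<close> and \<open>f\<close> have the same coefficients, and \<open>f + g\<close>
  reconstructs.\<close>
lemma defect_compression_eq_0:
  fixes f :: "nat \<Rightarrow> 'a::chilbert_space"
  assumes bessel: "bessel_sequence f B" and parseval: "is_parseval_frame (\<lambda>n. f n + g n)"
    and q: "\<And>n. cinner q (g n) = 0" and y: "\<And>n. cinner y (g n) = 0"
  shows "cinner (q - frame_op f q) y = 0"
proof -
  have "(\<lambda>n. cinner q (f n + g n) * cinner (f n + g n) y) sums cinner q y"
    using frame_op_cinner_sums[OF parseval_bessel_sequence[OF parseval], of q y]
    by (simp add: frame_op_parseval_frame[OF parseval])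
  moreover have "cinner q (f n + g n) * cinner (f n + g n) y = cinner q (f n) * cinner (f n) y" for n
    using q[of n] y[of n] cinner_commute[of "g n" y] by (simp add: cinner.add_right cinner_add_left)
  ultimately have "(\<lambda>n. cinner q (f n) * cinner (f n) y) sums cinner q y"
    by simp
  then show ?thesis
    using frame_op_cinner_sums[OF bessel, of q y] by (simp add: cinner.diff_left sums_unique2)
qed

lemma defect_maps_orthogonal_complement_into_cspan:
  fixes f :: "nat \<Rightarrow> 'a::chilbert_space"
  assumes bessel: "bessel_sequence f B" and parseval: "is_parseval_frame (\<lambda>n. f n + g n)"
    and e: "cinner.orthonormal e N" and g: "\<And>n. g n \<in> cspan (e ` {..<N})"
    and q: "\<forall>i<N. cinner q (e i) = 0"
  shows "q - frame_op f q \<in> cspan (e ` {..<N})"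
proof -
  have g_orth: "cinner x (g n) = 0" if "\<forall>i<N. cinner x (e i) = 0" for x n
    by (rule cinner.cspan_orthogonal_right[OF g]) (use that in auto)
  let ?t = "q - frame_op f q"
  let ?p = "\<Sum>i<N. cinner ?t (e i) *\<^sub>C e i"
  have w: "\<forall>i<N. cinner (?t - ?p) (e i) = 0"
    using e by (blast intro: cinner.orthonormal_residual)
  have "cinner ?t (?t - ?p) = 0"
    using g_orth[OF q] g_orth[OF w] by (rule defect_compression_eq_0[OF bessel parseval])
  moreover have "cinner ?p (?t - ?p) = 0"
  proof (rule cinner.cspan_orthogonal_left[OF sum_scaleC_in_cspan])
    show "cinner a (?t - ?p) = 0" if "a \<in> e ` {..<N}" for a
      using that w cinner_commute[of a "?t - ?p"] by auto
  qed
  ultimately have "cinner (?t - ?p) (?t - ?p) = 0"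
    by (simp only: cinner.diff_left) simp
  then have "?t = ?p"
    by simp
  then show ?thesis
    by (metis sum_scaleC_in_cspan)
qed

text \<open>With \<open>P\<close> the orthogonal projection onto \<open>L\<close>, \<open>T z = T (P z) + T (z - P z)\<close> lies in
  \<open>T L + L\<close>.\<close>
lemma finite_rank_defect_if_parseval_perturbation:
  fixes f :: "nat \<Rightarrow> 'a::chilbert_space"
  assumes bessel: "bessel_sequence f B"
    and "cfinite_dim L" "\<forall>n. g n \<in> L" and parseval: "is_parseval_frame (\<lambda>n. f n + g n)"
  shows "cfinite_dim (range (\<lambda>x. x - frame_op f x))"
proof -
  let ?T = "\<lambda>x. x - frame_op f x"
  have T: "clinear ?T"
    by (rule clinear_id_minus[OF clinear_frame_op[OF bessel]])
  obtain e N where e: "cinner.orthonormal e N" and L: "cspan (e ` {..<N}) = L"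
    using \<open>cfinite_dim L\<close> by (rule cinner.orthonormal_basis)
  let ?E = "e ` {..<N}"
  let ?P = "\<lambda>z. \<Sum>i<N. cinner z (e i) *\<^sub>C e i"
  have "range ?T \<subseteq> cspan (?T ` ?E \<union> ?E)"
  proof (rule image_subsetI)
    fix z
    have "?T (?P z) \<in> cspan (?T ` ?E)"
      by (rule clinear_image_cspan[OF T sum_scaleC_in_cspan])
    moreover have "?T (z - ?P z) \<in> cspan ?E"
      using \<open>\<forall>n. g n \<in> L\<close> e unfolding L[symmetric]
      by (blast intro: defect_maps_orthogonal_complement_into_cspan[OF bessel parseval]
          cinner.orthonormal_residual)
    ultimately have "?T (?P z) + ?T (z - ?P z) \<in> cspan (?T ` ?E \<union> ?E)"
      using cspan_mono[of "?T ` ?E" "?T ` ?E \<union> ?E"] cspan_mono[of ?E "?T ` ?E \<union> ?E"]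
      by (blast intro: csubspace_add[OF csubspace_cspan])
    then show "?T z \<in> cspan (?T ` ?E \<union> ?E)"
      by (simp add: clinear_add[OF T, symmetric])
  qed
  moreover have "finite (?T ` ?E \<union> ?E)"
    by simp
  ultimately show ?thesis
    using cfinite_dim_subspace csubspace_range[OF T] by blast
qed

lemma cinner_orthonormal_perturbation:
  "cinner z (y + (\<Sum>i<N. (cinner y (u i) - cinner y (e i)) *\<^sub>C e i))
    = cinner ((\<Sum>i<N. cinner z (e i) *\<^sub>C u i) + (z - (\<Sum>i<N. cinner z (e i) *\<^sub>C e i))) y"
  by (simp add: cinner.add_right cinner.diff_right cinner.sum_right cinner.scale_right
      cinner_add_left cinner.diff_left cinner.sum_left cinner_scaleC_left
      cinner_commute[of y "u _"] cinner_commute[of y "e _"] mult.commute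
      right_diff_distrib sum_subtractf)

text \<open>With \<open>P\<close> the projection onto \<open>E = span e\<close> and \<open>W z = (z - P z) + \<Sum>\<^sub>i \<langle>z, e\<^sub>i\<rangle> u\<^sub>i\<close>, the perturbed
  coefficients are \<open>\<langle>z, f\<^sub>n + g\<^sub>n\<rangle> = \<langle>W z, f\<^sub>n\<rangle>\<close>, and \<open>\<langle>S W z, W z\<rangle> = \<parallel>z\<parallel>\<^sup>2\<close> because \<open>S\<close> is the
  identity on \<open>E\<^sup>\<perp>\<close> while \<open>u\<close> is orthonormal for \<open>\<langle>S\<cdot>, \<cdot>\<rangle>\<close>.\<close>
lemma parseval_frame_orthonormal_perturbation:
  fixes f :: "nat \<Rightarrow> 'a::chilbert_space"
  assumes frame: "is_frame f"
    and e: "cinner.orthonormal e N"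
    and u: "inner_product_form.orthonormal (\<lambda>x y. cinner (frame_op f x) y) u N"
    and u_in: "\<And>i. i < N \<Longrightarrow> u i \<in> cspan (e ` {..<N})"
    and u_zero: "\<And>i. i < N \<Longrightarrow> u i = 0 \<Longrightarrow> e i = 0"
    and fixes_orth: "\<And>q. \<forall>i<N. cinner q (e i) = 0 \<Longrightarrow> frame_op f q = q"
  shows "is_parseval_frame (\<lambda>n. f n + (\<Sum>i<N. (cinner (f n) (u i) - cinner (f n) (e i)) *\<^sub>C e i))"
  unfolding is_parseval_frame_def
proof
  fix z
  obtain B where bessel: "bessel_sequence f B"
    using is_frameE[OF frame] by metis
  interpret S: inner_product_form "\<lambda>x y. cinner (frame_op f x) y"
    by (rule inner_product_form_frame_op[OF frame])
  let ?E = "e ` {..<N}"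
  define c where "c i = cinner z (e i)" for i
  define p where "p = (\<Sum>i<N. c i *\<^sub>C e i)"
  define q where "q = z - p"
  define v where "v = (\<Sum>i<N. c i *\<^sub>C u i)"
  have q: "\<forall>i<N. cinner q (e i) = 0"
    unfolding q_def p_def c_def using e by (blast intro: cinner.orthonormal_residual)
  have E_q: "cinner a q = 0" if "a \<in> ?E" for a
    using that q cinner_commute[of a q] by auto
  have "v \<in> cspan ?E"
    unfolding v_def using u_in by (intro csubspace_sum_scaleC[OF csubspace_cspan]) auto
  then have "cinner v q = 0"
    using E_q by (rule cinner.cspan_orthogonal_left)
  then have "cinner (frame_op f (v + q)) (v + q) = cinner (frame_op f v) v + cinner q q"
    using fixes_orth[OF q] cinner_commute[of v q]
    by (simp add: clinear_add[OF clinear_frame_op[OF bessel]] cinner_add_left cinner.add_right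
        cinner_frame_op_commute[OF bessel, of v q])
  also have "cinner (frame_op f v) v = (\<Sum>i<N. c i * cnj (c i))"
    unfolding v_def using u_zero by (intro S.orthonormal_sum_sum[OF u]) (auto simp: c_def)
  also have "\<dots> + cinner q q = cinner z z"
    using cinner.orthonormal_pythagoras[OF e, of z] by (simp add: q_def p_def c_def)
  finally have "(of_real (\<Sum>n. (cmod (cinner (v + q) (f n)))\<^sup>2) :: complex) = of_real ((norm z)\<^sup>2)"
    by (simp only: cinner_frame_op_self[OF bessel] cinner_self)
  then have "(\<Sum>n. (cmod (cinner (v + q) (f n)))\<^sup>2) = (norm z)\<^sup>2"
    by (simp only: of_real_eq_iff)
  moreover have "cinner z (f n + (\<Sum>i<N. (cinner (f n) (u i) - cinner (f n) (e i)) *\<^sub>C e i))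
      = cinner (v + q) (f n)" for n
    unfolding v_def q_def p_def c_def by (rule cinner_orthonormal_perturbation)
  ultimately show "summable (\<lambda>n. (cmod (cinner z (f n + (\<Sum>i<N. (cinner (f n) (u i)
        - cinner (f n) (e i)) *\<^sub>C e i))))\<^sup>2) \<and> (\<Sum>n. (cmod (cinner z (f n + (\<Sum>i<N.
        (cinner (f n) (u i) - cinner (f n) (e i)) *\<^sub>C e i))))\<^sup>2) = (norm z)\<^sup>2"
    using bessel_summable[OF bessel, of "v + q"] by simp
qed

lemma parseval_perturbation_if_finite_rank_defect:
  fixes f :: "nat \<Rightarrow> 'a::chilbert_space"
  assumes frame: "is_frame f" and "cfinite_dim (range (\<lambda>x. x - frame_op f x))"
  shows "\<exists>L g. csubspace L \<and> cfinite_dim L \<and> (\<forall>n. g n \<in> L) \<and> is_parseval_frame (\<lambda>n. f n + g n)"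
proof -
  obtain B where bessel: "bessel_sequence f B"
    using is_frameE[OF frame] by metis
  interpret S: inner_product_form "\<lambda>x y. cinner (frame_op f x) y"
    by (rule inner_product_form_frame_op[OF frame])
  define K where "K = range (\<lambda>x. x - frame_op f x)"
  obtain e N where e: "cinner.orthonormal e N" and K: "cspan (e ` {..<N}) = K"
    using assms(2) unfolding K_def[symmetric] by (rule cinner.orthonormal_basis)
  obtain u where u: "S.orthonormal u N" and u_span: "cspan (u ` {..<N}) = cspan (e ` {..<N})"
    and u_nonzero: "\<And>i. i < N \<Longrightarrow> e i \<notin> cspan (e ` {..<i}) \<Longrightarrow> u i \<noteq> 0"
    using S.gram_schmidt[of N e] by (metis order_refl)
  have u_in: "u i \<in> cspan (e ` {..<N})" if "i < N" for i
    using that cspan_superset[of "u ` {..<N}"] unfolding u_span by auto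
  have u_zero: "e i = 0" if "i < N" "u i = 0" for i
    using that u_nonzero cinner.orthonormal_not_in_cspan[OF e] by blast
  have fixes_orth: "frame_op f q = q" if "\<forall>i<N. cinner q (e i) = 0" for q
  proof (rule frame_op_fixes_orthogonal_complement_of_defect[OF bessel])
    show "cinner q k = 0" if "k \<in> range (\<lambda>x. x - frame_op f x)" for k
      using \<open>k \<in> _\<close> \<open>\<forall>i<N. _\<close> unfolding K_def[symmetric] K[symmetric]
      by (auto intro: cinner.cspan_orthogonal_right)
  qed
  define g where "g n = (\<Sum>i<N. (cinner (f n) (u i) - cinner (f n) (e i)) *\<^sub>C e i)" for n
  have "g n \<in> K" for n
    unfolding g_def K[symmetric] by (rule sum_scaleC_in_cspan)
  moreover have "is_parseval_frame (\<lambda>n. f n + g n)"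
    unfolding g_def using frame e u u_in u_zero fixes_orth
    by (rule parseval_frame_orthonormal_perturbation)
  moreover have "csubspace K" "cfinite_dim K"
    using assms(2) csubspace_range[OF clinear_id_minus[OF clinear_frame_op[OF bessel]]]
    unfolding K_def by simp_all
  ultimately show ?thesis
    by blast
qed

theorem theorem2p13:
  fixes f :: "nat \<Rightarrow> 'a::chilbert_space"
  assumes "separable_space TYPE('a)"
    and "infinite_dim_space TYPE('a)"
    and "is_frame f"
  shows "(cfinite_dim (range (\<lambda>x. x - frame_op f x))
          \<longleftrightarrow> (\<exists>L g. csubspace L \<and> cfinite_dim L \<and> (\<forall>n. g n \<in> L) \<and>
                      is_parseval_frame (\<lambda>n. f n + g n)))
       \<and> (cfinite_dim (range (\<lambda>x. x - frame_op f x))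
          \<longleftrightarrow> (\<exists>M. csubspace M \<and> closed M \<and> finite_codim M \<and>
                      (\<forall>x\<in>M. ((\<lambda>n. cinner x (f n) *\<^sub>C f n) sums x))))"
proof -
  obtain B where bessel: "bessel_sequence f B"
    using is_frameE[OF assms(3)] by metis
  show ?thesis
    using parseval_perturbation_if_finite_rank_defect[OF assms(3)]
      finite_rank_defect_if_parseval_perturbation[OF bessel]
      finite_codim_reconstruction_if_finite_rank_defect[OF bessel]
      finite_rank_defect_if_finite_codim_reconstruction[OF bessel]
    by blast
qed
end
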